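(* For every integer $n \geq 1$, $D_n = n\, Der_{n-1}$.
   Context: A linear arrangement of $\{1,\ldots,n\}$ is a sequence $a_1\cdots a_n$ in which each of $1,\ldots,n$ appears exactly once. It contains the pattern $ij$ if $a_t=i$ and $a_{t+1}=j$ for some $t$; otherwise it avoids it. $D_n$ is the number of linear arrangements of $\{1,\ldots,n\}$ avoiding all of the patterns $12, 23, \ldots, (n-1)n, n1$. $Der_m$ is the number of permutations of $\{1,\ldots,m\}$ with no fixed point (so $Der_0 = 1$). *)

theory Defs
  imports "HOL-Combinatorics.Permutations"
begin

definition arrangements :: "nat \<Rightarrow> nat list set" where
  "arrangements n = {xs. distinct xs \<and> set xs = {1..n}}"

definition contains_pattern :: "nat list \<Rightarrow> nat \<Rightarrow> nat \<Rightarrow> bool" where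
  "contains_pattern xs i j \<longleftrightarrow> (\<exists>t. Suc t < length xs \<and> xs ! t = i \<and> xs ! Suc t = j)"

definition forbidden_patterns :: "nat \<Rightarrow> (nat \<times> nat) set" where
  "forbidden_patterns n = {(i, i + 1) | i. 1 \<le> i \<and> i < n} \<union> {(n, 1)}"

definition D :: "nat \<Rightarrow> nat" where
  "D n = card {xs \<in> arrangements n.
                \<forall>(i, j) \<in> forbidden_patterns n. \<not> contains_pattern xs i j}"

definition Der :: "nat \<Rightarrow> nat" where
  "Der m = card {p. p permutes {1..m} \<and> (\<forall>x\<in>{1..m}. p x \<noteq> x)}"

end

theory Submission
  imports Defs
begin

text \<open>
  Fix the first entry k of an arrangement counted by D n and subtract k from all entries
  modulo n. This turns the forbidden cyclic successions i (i+1) and n 1 into ordinary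
  successions u (u+1) of values in {0..n-1}, except for the one ending in k, which cannot
  occur since k comes first. So each of the n choices of k contributes the number of
  permutations of {0..n-1} that start with 0 and contain no succession.

  In such a permutation of {0..m+2}, the largest entry m+2 has a predecessor x \<le> m.
  Deleting m+2 leaves such a permutation of {0..m+1}, unless m+2 is followed by x+1; then
  deleting x+1 as well and closing the gap in the values leaves one of {0..m}. Both
  operations are invertible for each of the m+1 choices of x, which gives the derangement
  recurrence a(m+2) = (m+1) (a(m+1) + a(m)) together with a(0) = 1 and a(1) = 0.
  For Der itself this recurrence comes from composing a derangement s with the
  transposition of N and s N: the result is a derangement of the remaining points, or of
  all but s N as well when s swaps N and s N.
\<close>

section \<open>Derangements\<close>

definition derangements :: "'a set \<Rightarrow> ('a \<Rightarrow> 'a) set" where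
  "derangements A = {p. p permutes A \<and> (\<forall>x\<in>A. p x \<noteq> x)}"

lemma finite_derangements: "finite A \<Longrightarrow> finite (derangements A)"
  by (rule finite_subset[OF _ finite_permutations[of A]]) (auto simp: derangements_def)

lemma card_derangements:
  assumes "finite A"
  shows "card (derangements A) = Der (card A)"
proof -
  obtain h where "bij_betw h A {1..card A}"
    using finite_same_card_bij[OF assms, of "{1..card A}"] by auto
  from bij_betw_derangements[OF this] show ?thesis
    unfolding Der_def derangements_def by (rule bij_betw_same_card)
qed

lemma Der_0: "Der 0 = 1"
  using card_derangements[of "{}::nat set"] by (simp add: derangements_def)

lemma Der_1: "Der 1 = 0"
  by (simp add: Der_def permutes_sing)

lemma transpose_comp_in_derangements:
  assumes "N \<in> A" "k \<in> A" "k \<noteq> N"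
    and t: "t \<in> derangements (A - {N}) \<union> derangements (A - {N, k})"
  shows "transpose N k \<circ> t \<in> derangements A"
proof -
  have tp: "t permutes A" and tN: "t N = N"
    using t by (auto simp: derangements_def intro: permutes_subset permutes_not_in)
  have tx: "t x \<noteq> x" if "x \<in> A" "x \<noteq> N" "x \<noteq> k" for x
    using t that by (auto simp: derangements_def)
  have t_neq_N: "t x \<noteq> N" if "x \<noteq> N" for x
    using permutes_inj[OF tp] that tN by (metis injD)
  have "transpose N k (t x) \<noteq> x" if "x \<in> A" for x
    using that tN tx[of x] t_neq_N[of x] assms(3) by (auto simp: transpose_eq_iff)
  moreover have "transpose N k \<circ> t permutes A"
    by (rule permutes_compose[OF tp permutes_swap_id[OF assms(1,2)]])
  ultimately show ?thesis by (simp add: derangements_def)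
qed

lemma transpose_comp_derangement:
  assumes "N \<in> A" "k \<in> A" and s: "s \<in> derangements A" "s N = k"
  shows "transpose N k \<circ> s \<in> derangements (A - {N}) \<union> derangements (A - {N, k})"
proof -
  define t where "t = transpose N k \<circ> s"
  have sp: "s permutes A" and sd: "\<And>x. x \<in> A \<Longrightarrow> s x \<noteq> x"
    using s by (auto simp: derangements_def)
  have tp: "t permutes A"
    unfolding t_def by (rule permutes_compose[OF sp permutes_swap_id[OF assms(1,2)]])
  have tN: "t N = N" using s by (simp add: t_def)
  have s_neq_k: "s x \<noteq> k" if "x \<noteq> N" for x
    using permutes_inj[OF sp] that s(2) by (metis injD)
  show ?thesis
  proof (cases "s k = N")
    case True
    have s_neq_N: "s x \<noteq> N" if "x \<noteq> k" for x
      using permutes_inj[OF sp] that True by (metis injD)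
    have "t k = k" using True by (simp add: t_def)
    then have "t permutes A - {N, k}"
      using tp tN by (intro permutes_superset[OF tp]) auto
    moreover have "t x \<noteq> x" if "x \<in> A - {N, k}" for x
      using that sd[of x] s_neq_k[of x] s_neq_N[of x] by (auto simp: t_def transpose_eq_iff)
    ultimately show ?thesis by (simp add: derangements_def t_def)
  next
    case False
    have "t permutes A - {N}"
      using tN by (intro permutes_superset[OF tp]) auto
    moreover have "t x \<noteq> x" if "x \<in> A - {N}" for x
      using that sd[of x] s_neq_k[of x] False by (auto simp: t_def transpose_eq_iff)
    ultimately show ?thesis by (simp add: derangements_def t_def)
  qed
qed

lemma card_derangements_fibre:
  assumes "finite A" "N \<in> A" "k \<in> A" "k \<noteq> N"
  shows "card {s \<in> derangements A. s N = k} = Der (card A - 1) + Der (card A - 2)"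
proof -
  have "{s \<in> derangements A. s N = k}
        = (\<lambda>t. transpose N k \<circ> t) ` (derangements (A - {N}) \<union> derangements (A - {N, k}))"
  proof (intro equalityI subsetI)
    fix s assume "s \<in> {s \<in> derangements A. s N = k}"
    then show "s \<in> (\<lambda>t. transpose N k \<circ> t) ` (derangements (A - {N}) \<union> derangements (A - {N, k}))"
      using transpose_comp_derangement[OF assms(2,3)]
      by (intro image_eqI[of _ _ "transpose N k \<circ> s"]) (auto simp: fun_eq_iff)
  next
    fix s assume "s \<in> (\<lambda>t. transpose N k \<circ> t) ` (derangements (A - {N}) \<union> derangements (A - {N, k}))"
    then obtain t where "s = transpose N k \<circ> t" "t \<in> derangements (A - {N}) \<union> derangements (A - {N, k})"
      by blast
    moreover have "t N = N" using calculation(2) by (auto simp: derangements_def intro: permutes_not_in)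
    ultimately show "s \<in> {s \<in> derangements A. s N = k}"
      using transpose_comp_in_derangements[OF assms(2-4)] by simp
  qed
  also have "card \<dots> = card (derangements (A - {N}) \<union> derangements (A - {N, k}))"
    by (rule card_image, rule inj_on_inverseI[of _ "\<lambda>s. transpose N k \<circ> s"])
      (simp add: comp_assoc[symmetric])
  also have "\<dots> = card (derangements (A - {N})) + card (derangements (A - {N, k}))"
  proof (rule card_Un_disjoint)
    show "derangements (A - {N}) \<inter> derangements (A - {N, k}) = {}"
      using assms by (auto simp: derangements_def intro: permutes_not_in)
  qed (use assms in \<open>auto intro: finite_derangements\<close>)
  also have "\<dots> = Der (card A - 1) + Der (card A - 2)"
    using assms by (simp add: card_derangements card_Diff_subset numeral_2_eq_2)
  finally show ?thesis .
qed

lemma card_derangements_rec: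
  assumes "finite A" "N \<in> A"
  shows "card (derangements A) = (card A - 1) * (Der (card A - 1) + Der (card A - 2))"
proof -
  have "derangements A = (\<Union>k\<in>A - {N}. {s \<in> derangements A. s N = k})"
    using assms(2) by (auto simp: derangements_def permutes_in_image)
  then have "card (derangements A) = card (\<Union>k\<in>A - {N}. {s \<in> derangements A. s N = k})"
    by (rule arg_cong)
  also have "\<dots> = (\<Sum>k\<in>A - {N}. card {s \<in> derangements A. s N = k})"
    by (rule card_UN_disjoint) (use assms(1) finite_derangements[OF assms(1)] in auto)
  also have "\<dots> = (\<Sum>k\<in>A - {N}. Der (card A - 1) + Der (card A - 2))"
    by (rule sum.cong) (use assms card_derangements_fibre in auto)
  finally show ?thesis using assms by simp
qed

lemma Der_Suc_Suc: "Der (Suc (Suc m)) = Suc m * (Der (Suc m) + Der m)"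
  using card_derangements_rec[of "{1..Suc (Suc m)}" 1] card_derangements[of "{1..Suc (Suc m)}"]
  by simp

section \<open>Permutations without successions\<close>

definition succ_free_perms :: "nat \<Rightarrow> nat list set" where
  "succ_free_perms m =
     {ws. distinct ws \<and> set ws = {0..m} \<and> hd ws = 0 \<and> successively (\<lambda>a b. b \<noteq> Suc a) ws}"

lemma finite_succ_free_perms: "finite (succ_free_perms m)"
  by (rule finite_subset[OF _ finite_subset_distinct[of "{0..m}"]]) (auto simp: succ_free_perms_def)

fun insert_after :: "'a \<Rightarrow> 'a list \<Rightarrow> 'a list \<Rightarrow> 'a list" where
  "insert_after x us [] = []"
| "insert_after x us (v # vs) = (if v = x then v # us @ vs else v # insert_after x us vs)"

lemma insert_after_append: "x \<notin> set as \<Longrightarrow> insert_after x us (as @ x # bs) = as @ x # us @ bs"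
  by (induction as) auto

definition skip :: "nat \<Rightarrow> nat \<Rightarrow> nat" where
  "skip x v = (if x < v then Suc v else v)"

definition unskip :: "nat \<Rightarrow> nat \<Rightarrow> nat" where
  "unskip x v = (if x < v then v - 1 else v)"

lemma inj_skip: "inj (skip x)"
  by (rule injI) (auto simp: skip_def split: if_splits)

lemma skip_unskip: "v \<noteq> Suc x \<Longrightarrow> skip x (unskip x v) = v"
  by (auto simp: skip_def unskip_def)

lemma unskip_skip: "unskip x (skip x v) = v"
  by (simp add: skip_def unskip_def)

lemma inj_on_unskip: "inj_on (unskip x) (- {Suc x})"
  by (rule inj_onI) (auto simp: unskip_def split: if_splits)

lemma skip_image:
  assumes "x \<le> m"
  shows "skip x ` {0..m} = {0..Suc m} - {Suc x}"
proof (intro equalityI subsetI)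
  fix y assume "y \<in> {0..Suc m} - {Suc x}"
  then show "y \<in> skip x ` {0..m}"
    using assms by (intro image_eqI[of _ _ "if y \<le> x then y else y - 1"]) (auto simp: skip_def)
qed (use assms in \<open>auto simp: skip_def\<close>)

lemma unskip_image: "x \<le> m \<Longrightarrow> unskip x ` ({0..Suc m} - {Suc x}) = {0..m}"
  by (simp add: skip_image[symmetric] image_comp unskip_skip)

lemma succ_free_map_skip:
  assumes "successively (\<lambda>a b. b \<noteq> Suc a) xs"
  shows "successively (\<lambda>a b. b \<noteq> Suc a) (map (skip x) xs)"
proof -
  have "successively (\<lambda>a b. skip x b \<noteq> Suc (skip x a)) xs"
    using assms by (rule successively_mono) (auto simp: skip_def)
  then show ?thesis by (simp add: successively_map)
qed

text \<open>unskip x turns the pair x, Suc (Suc x) into a succession, hence the condition on butlast.\<close>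

lemma succ_free_map_unskip:
  "successively (\<lambda>a b. b \<noteq> Suc a) xs \<Longrightarrow> Suc x \<notin> set xs \<Longrightarrow> x \<notin> set (butlast xs)
   \<Longrightarrow> successively (\<lambda>a b. b \<noteq> Suc a) (map (unskip x) xs)"
  by (induction xs rule: induct_list012) (auto simp: unskip_def split: if_splits)

lemma insert_top_in_succ_free_perms:
  assumes vs: "vs \<in> succ_free_perms (Suc m)" and "x \<le> m"
  shows "insert_after x [Suc (Suc m)] vs \<in> succ_free_perms (Suc (Suc m))"
proof -
  let ?N = "Suc (Suc m)"
  have "x \<in> set vs" using assms by (simp add: succ_free_perms_def)
  then obtain as bs where vs_eq: "vs = as @ x # bs" and "x \<notin> set as"
    by (meson split_list_first)
  then have ins_eq: "insert_after x [?N] vs = as @ x # ?N # bs"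
    by (simp add: insert_after_append)
  have N_notin: "?N \<notin> set vs" and hd_bs: "bs \<noteq> [] \<Longrightarrow> hd bs \<le> Suc m"
    using vs by (auto simp: succ_free_perms_def vs_eq)
  have "distinct (as @ x # ?N # bs)" "set (as @ x # ?N # bs) = insert ?N (set vs)"
    "hd (as @ x # ?N # bs) = hd vs"
    using vs N_notin by (auto simp: succ_free_perms_def vs_eq hd_append)
  moreover have "successively (\<lambda>a b. b \<noteq> Suc a) (as @ x # ?N # bs)"
    using vs hd_bs \<open>x \<le> m\<close>
    by (auto simp: succ_free_perms_def vs_eq successively_append_iff successively_Cons)
  ultimately show ?thesis
    using vs unfolding ins_eq succ_free_perms_def by auto
qed

lemma map_skip_succ_free_perms:
  assumes vs: "vs \<in> succ_free_perms m" and "x \<le> m"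
  shows "distinct (map (skip x) vs)" "set (map (skip x) vs) = {0..Suc m} - {Suc x}"
    "hd (map (skip x) vs) = 0" "successively (\<lambda>a b. b \<noteq> Suc a) (map (skip x) vs)"
proof -
  show "distinct (map (skip x) vs)"
    using vs by (simp add: succ_free_perms_def distinct_map inj_on_subset[OF inj_skip])
  show "set (map (skip x) vs) = {0..Suc m} - {Suc x}"
    using vs skip_image[OF \<open>x \<le> m\<close>] by (simp add: succ_free_perms_def)
  have "vs \<noteq> []" using vs by (auto simp: succ_free_perms_def)
  then show "hd (map (skip x) vs) = 0"
    using vs by (simp add: succ_free_perms_def hd_map skip_def)
  show "successively (\<lambda>a b. b \<noteq> Suc a) (map (skip x) vs)"
    using vs by (simp add: succ_free_perms_def succ_free_map_skip)
qed

lemma insert_top_succ_in_succ_free_perms: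
  assumes vs: "vs \<in> succ_free_perms m" and "x \<le> m"
  shows "insert_after x [Suc (Suc m), Suc x] (map (skip x) vs) \<in> succ_free_perms (Suc (Suc m))"
proof -
  let ?N = "Suc (Suc m)" and ?vs' = "map (skip x) vs"
  have "x \<in> set vs" using assms by (simp add: succ_free_perms_def)
  then obtain as bs where vs_eq: "vs = as @ x # bs" and "x \<notin> set as"
    by (meson split_list_first)
  define as' bs' where "as' = map (skip x) as" and "bs' = map (skip x) bs"
  have skip_x: "skip x x = x" by (simp add: skip_def)
  then have vs'_eq: "?vs' = as' @ x # bs'" by (simp add: vs_eq as'_def bs'_def)
  have "x \<notin> set as'"
    using \<open>x \<notin> set as\<close> skip_x unfolding as'_def by (metis inj_image_mem_iff inj_skip set_map)
  then have ins_eq: "insert_after x [?N, Suc x] ?vs' = as' @ x # ?N # Suc x # bs'"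
    by (simp add: vs'_eq insert_after_append)
  note vs' = map_skip_succ_free_perms[OF assms]
  have "distinct (as' @ x # ?N # Suc x # bs')"
    using vs'(1,2) \<open>x \<le> m\<close> unfolding vs'_eq by auto
  moreover have "set (as' @ x # ?N # Suc x # bs') = insert ?N (insert (Suc x) (set ?vs'))"
    unfolding vs'_eq by auto
  moreover have "\<dots> = {0..?N}"
    unfolding vs'(2) using \<open>x \<le> m\<close> by auto
  moreover have "hd (as' @ x # ?N # Suc x # bs') = 0"
    using vs'(3) by (simp add: vs'_eq hd_append split: if_splits)
  moreover have "successively (\<lambda>a b. b \<noteq> Suc a) (as' @ x # ?N # Suc x # bs')"
  proof -
    have "hd bs' \<noteq> Suc (Suc x)" if "bs' \<noteq> []"
    proof -
      have "hd bs \<noteq> Suc x"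
        using vs that
        by (auto simp: succ_free_perms_def vs_eq bs'_def successively_append_iff successively_Cons)
      then show ?thesis using that by (auto simp: bs'_def hd_map skip_def)
    qed
    then show ?thesis
      using vs'(4) \<open>x \<le> m\<close>
      by (auto simp: vs'_eq successively_append_iff successively_Cons)
  qed
  ultimately show ?thesis
    unfolding ins_eq succ_free_perms_def by simp
qed

lemma remove_top_in_succ_free_perms:
  assumes ws: "as @ x # Suc (Suc m) # bs \<in> succ_free_perms (Suc (Suc m))"
    and "bs = [] \<or> hd bs \<noteq> Suc x"
  shows "as @ x # bs \<in> succ_free_perms (Suc m)"
proof -
  have "set (as @ x # bs) = {0..Suc (Suc m)} - {Suc (Suc m)}"
    using ws by (auto simp: succ_free_perms_def)
  also have "\<dots> = {0..Suc m}" by auto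
  finally show ?thesis
    using ws assms(2)
    by (auto simp: succ_free_perms_def hd_append successively_append_iff successively_Cons
        split: if_splits)
qed

lemma remove_top_succ_in_succ_free_perms:
  assumes ws: "as @ x # Suc (Suc m) # Suc x # bs \<in> succ_free_perms (Suc (Suc m))"
  shows "map (unskip x) (as @ x # bs) \<in> succ_free_perms m"
proof -
  let ?N = "Suc (Suc m)" and ?P = "\<lambda>a b. b \<noteq> Suc a"
  have dist: "distinct (as @ x # ?N # Suc x # bs)"
    and set_ws: "set (as @ x # ?N # Suc x # bs) = {0..?N}"
    and hd_ws: "hd (as @ x # ?N # Suc x # bs) = 0"
    and succ_ws: "successively ?P ((as @ [x]) @ ?N # Suc x # bs)"
    using ws by (simp_all add: succ_free_perms_def)
  have "x \<le> m"
    using dist set_ws succ_ws by (auto simp: successively_append_iff)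
  have "set (as @ x # bs) = set (as @ x # ?N # Suc x # bs) - {?N, Suc x}"
    using dist by auto
  also have "\<dots> = {0..Suc m} - {Suc x}"
    unfolding set_ws by auto
  finally have set_L: "set (as @ x # bs) = {0..Suc m} - {Suc x}" .
  then have "set (map (unskip x) (as @ x # bs)) = {0..m}"
    unfolding set_map by (rule ssubst) (rule unskip_image[OF \<open>x \<le> m\<close>])
  moreover have "distinct (map (unskip x) (as @ x # bs))"
  proof -
    have "set (as @ x # bs) \<subseteq> - {Suc x}" "distinct (as @ x # bs)"
      using dist by auto
    then show ?thesis
      by (simp only: distinct_map) (blast intro: inj_on_subset[OF inj_on_unskip])
  qed
  moreover have "hd (map (unskip x) (as @ x # bs)) = 0"
    using hd_ws by (simp add: hd_append hd_map unskip_def split: if_splits)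
  moreover have "successively ?P (map (unskip x) (as @ [x]) @ map (unskip x) bs)"
  proof -
    have "successively ?P (map (unskip x) (as @ [x]))"
      using succ_ws dist by (intro succ_free_map_unskip) (auto simp: successively_append_iff)
    moreover have "successively ?P (map (unskip x) bs)"
      using succ_ws dist by (intro succ_free_map_unskip)
        (auto simp: successively_append_iff successively_Cons dest: in_set_butlastD)
    moreover have "unskip x (hd bs) \<noteq> Suc x" if "bs \<noteq> []"
    proof -
      have "hd bs \<noteq> Suc x"
        using dist hd_in_set[OF that] by auto
      moreover have "hd bs \<noteq> Suc (Suc x)"
        using succ_ws that by (auto simp: successively_append_iff successively_Cons)
      then show ?thesis by (auto simp: unskip_def)
    qed
    ultimately show ?thesis
      by (auto simp: successively_append_iff successively_Cons hd_map unskip_def)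
  qed
  ultimately show ?thesis
    by (simp add: succ_free_perms_def)
qed

lemma succ_free_perms_Suc_Suc_cases:
  assumes ws: "ws \<in> succ_free_perms (Suc (Suc m))"
  obtains (top) x vs where "x \<le> m" "vs \<in> succ_free_perms (Suc m)"
      "ws = insert_after x [Suc (Suc m)] vs"
  | (top_succ) x vs where "x \<le> m" "vs \<in> succ_free_perms m"
      "ws = insert_after x [Suc (Suc m), Suc x] (map (skip x) vs)"
proof -
  let ?N = "Suc (Suc m)"
  have "?N \<in> set ws" using ws by (simp add: succ_free_perms_def)
  then obtain pre bs where ws_split: "ws = pre @ ?N # bs" by (meson split_list)
  have "pre \<noteq> []" using ws ws_split by (auto simp: succ_free_perms_def)
  then obtain as x where ws_eq: "ws = as @ x # ?N # bs"
    using ws_split by (metis append.assoc append_Cons append_Nil rev_exhaust)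
  have dist: "distinct ws" and succ_ws: "successively (\<lambda>a b. b \<noteq> Suc a) ((as @ [x]) @ ?N # bs)"
    using ws by (simp_all add: succ_free_perms_def ws_eq)
  have "x \<in> set ws" by (simp add: ws_eq)
  then have "x \<le> ?N" using ws by (simp add: succ_free_perms_def)
  moreover have "x \<noteq> ?N" "x \<noteq> Suc m"
    using dist succ_ws by (auto simp: ws_eq successively_append_iff)
  ultimately have "x \<le> m" by auto
  have x_notin: "x \<notin> set as" using dist by (simp add: ws_eq)
  show thesis
  proof (cases "bs \<noteq> [] \<and> hd bs = Suc x")
    case True
    then obtain bs' where bs_eq: "bs = Suc x # bs'" by (cases bs) auto
    define vs where "vs = map (unskip x) (as @ x # bs')"
    have "vs \<in> succ_free_perms m"
      using ws remove_top_succ_in_succ_free_perms unfolding vs_def ws_eq bs_eq by blast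
    moreover have "map (skip x) vs = as @ x # bs'"
      using dist unfolding vs_def ws_eq bs_eq by (auto intro!: map_idI skip_unskip)
    ultimately show thesis
      using top_succ \<open>x \<le> m\<close> x_notin by (simp add: ws_eq bs_eq insert_after_append)
  next
    case False
    then show thesis
      using top[of x "as @ x # bs"] \<open>x \<le> m\<close> x_notin ws remove_top_in_succ_free_perms
      by (auto simp: ws_eq insert_after_append)
  qed
qed

lemma insert_after_eqD:
  assumes eq: "insert_after x (y # us) vs = insert_after x' (y # us') vs'"
    and "x \<in> set vs" "x' \<in> set vs'" "y \<notin> set vs" "y \<notin> set vs'" "y \<notin> set us" "y \<notin> set us'"
  obtains as bs bs' where "x' = x" "vs = as @ x # bs" "vs' = as @ x # bs'" "us @ bs = us' @ bs'"
proof -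
  obtain as bs where vs: "vs = as @ x # bs" "x \<notin> set as"
    using assms(2) by (meson split_list_first)
  obtain as' bs' where vs': "vs' = as' @ x' # bs'" "x' \<notin> set as'"
    using assms(3) by (meson split_list_first)
  have "(as @ [x]) @ y # us @ bs = (as' @ [x']) @ y # us' @ bs'"
    using eq by (simp add: vs vs' insert_after_append)
  then have "as @ [x] = as' @ [x']" "us @ bs = us' @ bs'"
    using assms(4-7) by (subst (asm) append_Cons_eq_iff; auto simp: vs vs')+
  then show thesis using that vs vs' by auto
qed

lemma insert_top_inj:
  assumes "insert_after x [Suc (Suc m)] vs = insert_after x' [Suc (Suc m)] vs'"
    and "vs \<in> succ_free_perms (Suc m)" "vs' \<in> succ_free_perms (Suc m)" "x \<le> m" "x' \<le> m"
  shows "vs = vs' \<and> x = x'"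
proof -
  from assms(1) obtain as bs bs' where "x' = x" "vs = as @ x # bs" "vs' = as @ x # bs'" "bs = bs'"
    by (rule insert_after_eqD) (use assms(2-5) in \<open>auto simp: succ_free_perms_def\<close>)
  then show ?thesis by simp
qed

lemma insert_top_succ_inj:
  assumes "insert_after x [Suc (Suc m), Suc x] (map (skip x) vs)
           = insert_after x' [Suc (Suc m), Suc x'] (map (skip x') vs')"
    and "vs \<in> succ_free_perms m" "vs' \<in> succ_free_perms m" "x \<le> m" "x' \<le> m"
  shows "vs = vs' \<and> x = x'"
proof -
  note skip = map_skip_succ_free_perms[OF assms(2,4)] map_skip_succ_free_perms[OF assms(3,5)]
  from assms(1) obtain as bs bs' where "x' = x" "map (skip x) vs = as @ x # bs"
      "map (skip x') vs' = as @ x # bs'" "Suc x # bs = Suc x' # bs'"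
    by (rule insert_after_eqD) (use skip assms(4,5) in auto)
  then have "x' = x" "map (skip x) vs = map (skip x) vs'" by simp_all
  then show ?thesis by (simp add: inj_map_eq_map inj_skip)
qed

lemma insert_top_neq_insert_top_succ:
  assumes "insert_after x [Suc (Suc m)] vs = insert_after x' [Suc (Suc m), Suc x'] (map (skip x') vs')"
    and "vs \<in> succ_free_perms (Suc m)" "vs' \<in> succ_free_perms m" "x \<le> m" "x' \<le> m"
  shows False
proof -
  from assms(1) obtain as bs bs' where "x' = x" "vs = as @ x # bs" "bs = Suc x' # bs'"
    by (rule insert_after_eqD)
      (use assms(2-5) map_skip_succ_free_perms[OF assms(3,5)] in \<open>auto simp: succ_free_perms_def\<close>)
  then show False
    using assms(2) by (auto simp: succ_free_perms_def successively_append_iff)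
qed

lemma card_succ_free_perms_Suc_Suc:
  "card (succ_free_perms (Suc (Suc m)))
   = Suc m * (card (succ_free_perms (Suc m)) + card (succ_free_perms m))"
proof -
  let ?N = "Suc (Suc m)"
  define f where "f = (\<lambda>(vs, x). insert_after x [?N] vs)"
  define g where "g = (\<lambda>(vs, x). insert_after x [?N, Suc x] (map (skip x) vs))"
  define A where "A = succ_free_perms (Suc m) \<times> {0..m}"
  define B where "B = succ_free_perms m \<times> {0..m}"
  have "succ_free_perms ?N = f ` A \<union> g ` B"
  proof (intro equalityI subsetI)
    fix ws assume "ws \<in> succ_free_perms ?N"
    then show "ws \<in> f ` A \<union> g ` B"
    proof (cases rule: succ_free_perms_Suc_Suc_cases)
      case (top x vs)
      then show ?thesis by (auto simp: f_def A_def intro!: image_eqI[of _ _ "(vs, x)"])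
    next
      case (top_succ x vs)
      then show ?thesis by (auto simp: g_def B_def intro!: image_eqI[of _ _ "(vs, x)"])
    qed
  qed (auto simp: f_def g_def A_def B_def insert_top_in_succ_free_perms
      insert_top_succ_in_succ_free_perms)
  moreover have "inj_on f A"
    by (auto simp: inj_on_def f_def A_def dest: insert_top_inj)
  moreover have "inj_on g B"
    by (auto simp: inj_on_def g_def B_def dest: insert_top_succ_inj)
  moreover have "f ` A \<inter> g ` B = {}"
    by (auto simp: f_def g_def A_def B_def dest: insert_top_neq_insert_top_succ)
  moreover have "finite A" "finite B"
    by (simp_all add: A_def B_def finite_succ_free_perms)
  ultimately have "card (succ_free_perms ?N) = card A + card B"
    by (simp add: card_Un_disjoint card_image)
  then show ?thesis
    by (simp add: A_def B_def card_cartesian_product algebra_simps)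
qed

lemma succ_free_perms_0: "succ_free_perms 0 = {[0]}"
proof (intro equalityI subsetI)
  fix ws assume "ws \<in> succ_free_perms 0"
  then have ws: "distinct ws" "set ws = {0}" by (simp_all add: succ_free_perms_def)
  then have "length ws = 1" using distinct_card[of ws] by simp
  then obtain a where "ws = [a]" by (auto simp: length_Suc_conv)
  then show "ws \<in> {[0]}" using ws by simp
qed (simp add: succ_free_perms_def)

lemma succ_free_perms_1: "succ_free_perms 1 = {}"
proof (intro equals0I)
  fix ws assume "ws \<in> succ_free_perms 1"
  moreover have "{0..1::nat} = {0, 1}" by auto
  ultimately have ws: "distinct ws" "set ws = {0, 1}" "hd ws = 0" "successively (\<lambda>a b. b \<noteq> Suc a) ws"
    by (simp_all add: succ_free_perms_def)
  then have "length ws = 2" using distinct_card[of ws] by simp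
  then obtain a b where ab: "ws = [a, b]" by (metis length_0_conv length_Suc_conv numeral_2_eq_2)
  have "b \<in> set ws" using ab by simp
  then have "b \<in> {0, 1}" using ws(2) by blast
  moreover have "a = 0" "b \<noteq> a" using ws(1,3) ab by auto
  ultimately have "b = Suc a" by auto
  then show False using ws(4) ab by simp
qed

lemma card_succ_free_perms: "card (succ_free_perms m) = Der m"
proof (induction m rule: induct_nat_012)
  case 0
  then show ?case by (simp add: succ_free_perms_0 Der_0)
next
  case 1
  then show ?case using succ_free_perms_1 Der_1 by (simp add: One_nat_def)
next
  case (ge2 m)
  then show ?case by (simp add: card_succ_free_perms_Suc_Suc Der_Suc_Suc)
qed

section \<open>Fixing the first entry\<close>

definition avoiders :: "nat \<Rightarrow> nat list set" where
  "avoiders n = {xs \<in> arrangements n. \<forall>(i, j) \<in> forbidden_patterns n. \<not> contains_pattern xs i j}"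

lemma avoids_patterns_iff:
  "(\<forall>(i, j) \<in> P. \<not> contains_pattern xs i j) \<longleftrightarrow> successively (\<lambda>a b. (a, b) \<notin> P) xs"
  by (auto simp: successively_conv_nth contains_pattern_def)

lemma successively_conj:
  "successively P xs \<Longrightarrow> successively Q xs \<Longrightarrow> successively (\<lambda>a b. P a b \<and> Q a b) xs"
  by (induction xs rule: induct_list012) auto

lemma successively_neq_hd: "distinct xs \<Longrightarrow> successively (\<lambda>a b. b \<noteq> hd xs) xs"
  by (cases xs) (auto simp: successively_Cons successively_conv_nth in_set_conv_nth)

definition rot :: "nat \<Rightarrow> nat \<Rightarrow> nat \<Rightarrow> nat" where
  "rot n k v = (if k \<le> v then v - k else v + n - k)"

definition unrot :: "nat \<Rightarrow> nat \<Rightarrow> nat \<Rightarrow> nat" where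
  "unrot n k u = (if u + k \<le> n then u + k else u + k - n)"

lemma rot_unrot: "k \<in> {1..n} \<Longrightarrow> u < n \<Longrightarrow> rot n k (unrot n k u) = u"
  by (auto simp: rot_def unrot_def)

lemma unrot_rot: "k \<in> {1..n} \<Longrightarrow> v \<in> {1..n} \<Longrightarrow> unrot n k (rot n k v) = v"
  by (auto simp: rot_def unrot_def)

lemma rot_less: "k \<in> {1..n} \<Longrightarrow> v \<in> {1..n} \<Longrightarrow> rot n k v < n"
  by (auto simp: rot_def)

lemma unrot_mem: "k \<in> {1..n} \<Longrightarrow> u < n \<Longrightarrow> unrot n k u \<in> {1..n}"
  by (auto simp: unrot_def)

lemma bij_betw_rot: "k \<in> {1..n} \<Longrightarrow> bij_betw (rot n k) {1..n} {0..<n}"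
  by (rule bij_betw_byWitness[of _ "unrot n k"]) (use rot_unrot unrot_rot rot_less unrot_mem in auto)

lemma bij_betw_unrot: "k \<in> {1..n} \<Longrightarrow> bij_betw (unrot n k) {0..<n} {1..n}"
  by (rule bij_betw_byWitness[of _ "rot n k"]) (use rot_unrot unrot_rot rot_less unrot_mem in auto)

lemma forbidden_patterns_iff:
  "(a, b) \<in> forbidden_patterns n \<longleftrightarrow> (1 \<le> a \<and> a < n \<and> b = Suc a) \<or> (a = n \<and> b = 1)"
  by (auto simp: forbidden_patterns_def)

lemma rot_Suc_iff:
  assumes "a \<in> {1..n}" "b \<in> {1..n}" "k \<in> {1..n}"
  shows "rot n k b = Suc (rot n k a) \<longleftrightarrow> (a, b) \<in> forbidden_patterns n \<and> b \<noteq> k"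
  using assms unfolding rot_def forbidden_patterns_iff by (auto split: if_splits)

lemma map_rot_in_succ_free_perms:
  assumes k: "k \<in> {1..Suc m}" and xs: "xs \<in> avoiders (Suc m)" "hd xs = k"
  shows "map (rot (Suc m) k) xs \<in> succ_free_perms m"
proof -
  let ?n = "Suc m"
  have set_xs: "set xs = {1..?n}" and "distinct xs"
    and avoid: "successively (\<lambda>a b. (a, b) \<notin> forbidden_patterns ?n) xs"
    using xs by (simp_all add: avoiders_def arrangements_def avoids_patterns_iff)
  have bij: "bij_betw (rot ?n k) (set xs) {0..m}"
    using bij_betw_rot[OF k] by (simp add: set_xs atLeastLessThanSuc_atLeastAtMost)
  have "successively (\<lambda>a b. rot ?n k b \<noteq> Suc (rot ?n k a)) xs"
    using avoid by (rule successively_mono) (use set_xs rot_Suc_iff[OF _ _ k] in auto)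
  moreover have "xs \<noteq> []" using set_xs by auto
  then have "hd (map (rot ?n k) xs) = 0"
    using xs(2) by (simp add: hd_map rot_def)
  ultimately show ?thesis
    using bij \<open>distinct xs\<close>
    by (simp add: succ_free_perms_def successively_map distinct_map bij_betw_def)
qed

lemma map_unrot_in_avoiders:
  assumes k: "k \<in> {1..Suc m}" and ws: "ws \<in> succ_free_perms m"
  shows "map (unrot (Suc m) k) ws \<in> avoiders (Suc m)" "hd (map (unrot (Suc m) k) ws) = k"
proof -
  let ?n = "Suc m"
  have set_ws: "set ws = {0..<?n}" and "distinct ws" and "hd ws = 0"
    and succ_free: "successively (\<lambda>a b. b \<noteq> Suc a) ws"
    using ws by (simp_all add: succ_free_perms_def atLeastLessThanSuc_atLeastAtMost)
  have bij: "bij_betw (unrot ?n k) (set ws) {1..?n}"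
    using bij_betw_unrot[OF k] by (simp add: set_ws)
  have "successively (\<lambda>a b. b \<noteq> Suc a \<and> b \<noteq> 0) ws"
    using successively_conj[OF succ_free successively_neq_hd[OF \<open>distinct ws\<close>]]
    by (simp add: \<open>hd ws = 0\<close>)
  then have "successively (\<lambda>u w. (unrot ?n k u, unrot ?n k w) \<notin> forbidden_patterns ?n) ws"
  proof (rule successively_mono)
    fix u w assume uw: "u \<in> set ws" "w \<in> set ws" and "w \<noteq> Suc u \<and> w \<noteq> 0"
    moreover have "rot ?n k (unrot ?n k u) = u" "rot ?n k (unrot ?n k w) = w" "rot ?n k k = 0"
      using rot_unrot[OF k] uw set_ws by (auto simp: rot_def)
    moreover have "unrot ?n k u \<in> {1..?n}" "unrot ?n k w \<in> {1..?n}"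
      using unrot_mem[OF k] uw set_ws by auto
    ultimately show "(unrot ?n k u, unrot ?n k w) \<notin> forbidden_patterns ?n"
      using rot_Suc_iff[OF _ _ k, of "unrot ?n k u" "unrot ?n k w"] by metis
  qed
  moreover have "ws \<noteq> []" using set_ws by auto
  ultimately show "map (unrot ?n k) ws \<in> avoiders ?n" "hd (map (unrot ?n k) ws) = k"
    using bij \<open>distinct ws\<close> \<open>hd ws = 0\<close> k
    by (simp_all add: avoiders_def arrangements_def avoids_patterns_iff successively_map
        distinct_map hd_map unrot_def bij_betw_def)
qed

lemma card_avoiders_hd:
  assumes k: "k \<in> {1..Suc m}"
  shows "card {xs \<in> avoiders (Suc m). hd xs = k} = card (succ_free_perms m)"
proof -
  let ?n = "Suc m"
  have "bij_betw (map (rot ?n k)) {xs \<in> avoiders ?n. hd xs = k} (succ_free_perms m)"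
  proof (rule bij_betw_byWitness[of _ "map (unrot ?n k)"])
    show "\<forall>xs\<in>{xs \<in> avoiders ?n. hd xs = k}. map (unrot ?n k) (map (rot ?n k) xs) = xs"
      using unrot_rot[OF k] by (auto simp: avoiders_def arrangements_def intro!: map_idI)
    show "\<forall>ws\<in>succ_free_perms m. map (rot ?n k) (map (unrot ?n k) ws) = ws"
      using rot_unrot[OF k] by (auto simp: succ_free_perms_def intro!: map_idI)
    show "map (rot ?n k) ` {xs \<in> avoiders ?n. hd xs = k} \<subseteq> succ_free_perms m"
      using map_rot_in_succ_free_perms[OF k] by blast
    show "map (unrot ?n k) ` succ_free_perms m \<subseteq> {xs \<in> avoiders ?n. hd xs = k}"
      using map_unrot_in_avoiders[OF k] by blast
  qed
  then show ?thesis by (rule bij_betw_same_card)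
qed

lemma D_eq_card_succ_free_perms: "D (Suc m) = Suc m * card (succ_free_perms m)"
proof -
  let ?n = "Suc m"
  have cover: "avoiders ?n = (\<Union>k\<in>{1..?n}. {xs \<in> avoiders ?n. hd xs = k})"
  proof (intro equalityI subsetI)
    fix xs assume "xs \<in> avoiders ?n"
    moreover from this have "set xs = {1..?n}" by (simp add: avoiders_def arrangements_def)
    then have "hd xs \<in> {1..?n}" using hd_in_set[of xs] by fastforce
    ultimately show "xs \<in> (\<Union>k\<in>{1..?n}. {xs \<in> avoiders ?n. hd xs = k})" by blast
  qed auto
  have "D ?n = card (avoiders ?n)"
    unfolding D_def avoiders_def ..
  also have "\<dots> = card (\<Union>k\<in>{1..?n}. {xs \<in> avoiders ?n. hd xs = k})"
    using cover by (rule arg_cong)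
  also have "\<dots> = (\<Sum>k\<in>{1..?n}. card {xs \<in> avoiders ?n. hd xs = k})"
  proof (rule card_UN_disjoint)
    have "finite (avoiders ?n)"
      by (rule finite_subset[OF _ finite_subset_distinct[of "{1..?n}"]])
        (auto simp: avoiders_def arrangements_def)
    then show "\<forall>k\<in>{1..?n}. finite {xs \<in> avoiders ?n. hd xs = k}" by simp
  qed auto
  also have "\<dots> = ?n * card (succ_free_perms m)"
    by (simp add: card_avoiders_hd)
  finally show ?thesis .
qed

theorem lemma3p1:
  fixes n :: nat
  assumes "n \<ge> 1"
  shows "D n = n * Der (n - 1)"
proof -
  obtain m where "n = Suc m" using assms by (cases n) auto
  then show ?thesis
    by (simp add: D_eq_card_succ_free_perms card_succ_free_perms)
qed

end
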